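(* Let $n,k,r\ge 3$ be integers with $r,k\le 0.01\log n$, and let $\mathcal{H}=\mathcal{H}(n,k,r)$. (i) If $r\le k$, then $\dfrac{n^{2k}}{r^{2k}}\le e(\mathcal{H})\le \dfrac{k\,2^{r+k}}{r!}\,n^{2k}$. (ii) If $r=k+1$, then $\dfrac{n^{2k}}{r^{2k}}\le e(\mathcal{H})\le \dfrac{k\,2^{r+k}}{r!}\,n^{2k}\log n$. (iii) If $k+1<r\le 2k$, then $k\binom{n}{r}n^{k-1}\le e(\mathcal{H})\le \dfrac{k\,2^{r+k+1}}{r!}\,n^{r+k-1}$.
   Context: Logarithms are to base 2. For integers $n,k,r\ge 3$, $\mathcal{H}(n,k,r)$ is the $r$-uniform hypergraph with vertex set $[n]^k=\{1,\dots,n\}^k$ whose edges are all $r$-element subsets of $[n]^k$ whose points lie on a common line in $\mathbb{R}^k$. $e(\cdot)$ denotes the number of edges. *)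

theory Defs
  imports "HOL-Analysis.Analysis"
begin

text \<open>The grid [n]^k, embedded in R^k; the dimension k is CARD('k).\<close>
definition grid :: "nat \<Rightarrow> (real^'k) set" where
  "grid n = {x. \<forall>i. x $ i \<in> real ` {1..n}}"

definition hedges :: "nat \<Rightarrow> nat \<Rightarrow> (real^'k) set set" where
  "hedges n r = {S. S \<subseteq> grid n \<and> card S = r \<and> collinear S}"

end

theory Submission
  imports Defs
begin

text \<open>Every edge consists of \<open>r\<close> lattice points on a line, so it is \<open>{x + t w | t \<in> T}\<close>
  for a grid point \<open>x\<close>, a primitive integer step \<open>w\<close> of sup-norm \<open>m\<close> and a set
  \<open>T \<ni> 0\<close> of \<open>r\<close> integers in \<open>[0, (n - 1) / m]\<close>. Counting these codes gives
  \<open>e \<le> 2 k n\<^sup>k\<^sup>+\<^sup>r\<^sup>-\<^sup>1 / (r - 1)! \<cdot> \<Sum>\<^sub>m (2m + 1)\<^sup>k\<^sup>-\<^sup>1 / m\<^sup>r\<^sup>-\<^sup>1\<close>, and the three regimes come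
  from this shell sum: it is of order \<open>2\<^sup>k n\<^sup>k\<^sup>-\<^sup>r\<^sup>+\<^sup>1\<close> for \<open>r \<le> k\<close>, of order
  \<open>2\<^sup>k log n\<close> for \<open>r = k + 1\<close>, and at most \<open>2 \<cdot> 3\<^sup>k\<^sup>-\<^sup>1\<close> for \<open>r \<ge> k + 2\<close>.
  For the lower bounds, when \<open>r \<le> k + 1\<close> one counts progressions of length \<open>r\<close> whose
  step has sup-norm at most \<open>n / 2r\<close> and a positive first coordinate; when \<open>r > k + 1\<close>
  one counts \<open>r\<close>-subsets of axis-parallel lines.\<close>

definition vec_of_int :: "('k \<Rightarrow> int) \<Rightarrow> real^'k" where
  "vec_of_int z = (\<chi> i. of_int (z i))"

lemma vec_of_int_nth [simp]: "vec_of_int z $ i = of_int (z i)"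
  by (simp add: vec_of_int_def)

lemma vec_of_int_eq_iff [simp]: "vec_of_int a = vec_of_int b \<longleftrightarrow> a = b"
  by (auto simp: vec_eq_iff fun_eq_iff)

lemma inj_vec_of_int: "inj vec_of_int"
  by (rule injI) simp

lemma vec_of_int_eq_0_iff: "vec_of_int z = 0 \<longleftrightarrow> z = (\<lambda>_. 0)"
  by (auto simp: vec_eq_iff fun_eq_iff)

lemma vec_of_int_diff: "vec_of_int (\<lambda>i. a i - b i) = vec_of_int a - vec_of_int b"
  by (simp add: vec_eq_iff)

lemma vec_of_int_scale: "vec_of_int (\<lambda>i. c * a i) = of_int c *\<^sub>R vec_of_int a"
  by (simp add: vec_eq_iff)

definition int_grid :: "nat \<Rightarrow> ('k \<Rightarrow> int) set" where
  "int_grid n = PiE UNIV (\<lambda>_. {1..int n})"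

lemma mem_int_grid_iff: "z \<in> int_grid n \<longleftrightarrow> (\<forall>i. 1 \<le> z i \<and> z i \<le> int n)"
  by (simp add: int_grid_def PiE_UNIV_domain Pi_iff)

lemma card_int_grid: "card (int_grid n :: ('k::finite \<Rightarrow> int) set) = n ^ CARD('k)"
  by (simp add: int_grid_def card_PiE)

lemma finite_int_grid: "finite (int_grid n :: ('k::finite \<Rightarrow> int) set)"
  by (simp add: int_grid_def finite_PiE)

lemma grid_eq_image_int_grid: "grid n = vec_of_int ` int_grid n"
proof (intro set_eqI iffI)
  fix x :: "real^'k" assume "x \<in> grid n"
  hence x: "\<forall>i. \<exists>a\<in>{1..n}. x $ i = real a" by (auto simp: grid_def)
  define z where "z i = \<lfloor>x $ i\<rfloor>" for i
  have "x $ i = of_int (z i) \<and> 1 \<le> z i \<and> z i \<le> int n" for i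
  proof -
    from x obtain a where "a \<in> {1..n}" "x $ i = real a" by blast
    thus ?thesis by (simp add: z_def)
  qed
  hence "vec_of_int z = x" "z \<in> int_grid n" by (auto simp: vec_eq_iff mem_int_grid_iff)
  thus "x \<in> vec_of_int ` int_grid n" by blast
next
  fix x :: "real^'k" assume "x \<in> vec_of_int ` int_grid n"
  then obtain z where z: "\<forall>i. 1 \<le> z i \<and> z i \<le> int n" and x: "x = vec_of_int z"
    by (auto simp: mem_int_grid_iff)
  have "x $ i = real (nat (z i)) \<and> nat (z i) \<in> {1..n}" for i
    using z[rule_format, of i] x by auto
  thus "x \<in> grid n" unfolding grid_def by blast
qed

lemma finite_hedges: "finite (hedges n r :: (real^'k::finite) set set)"
  by (rule finite_subset[of _ "Pow (grid n)"])
    (auto simp: hedges_def grid_eq_image_int_grid finite_int_grid)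

lemma two_le_card_obtains:
  assumes "2 \<le> card S"
  obtains a b where "a \<in> S" "b \<in> S" "a \<noteq> b"
proof -
  have "finite S" using assms card.infinite by force
  moreover have "\<not> card S \<le> Suc 0" using assms by simp
  ultimately show ?thesis using that card_le_Suc0_iff_eq by blast
qed

definition progression :: "'a::real_vector \<Rightarrow> 'a \<Rightarrow> nat set \<Rightarrow> 'a set" where
  "progression x v T = (\<lambda>t. x + real t *\<^sub>R v) ` T"

lemma inj_progression_param:
  fixes x v :: "'a::real_vector"
  shows "v \<noteq> 0 \<Longrightarrow> inj (\<lambda>t::nat. x + real t *\<^sub>R v)"
  by (rule injI) simp

lemma card_progression: "v \<noteq> 0 \<Longrightarrow> card (progression x v T) = card T"
  unfolding progression_def by (rule card_image) (simp add: inj_on_subset[OF inj_progression_param])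

lemma collinear_progression: "collinear (progression x v T)"
  unfolding collinear_def progression_def
proof (intro exI[of _ v] ballI)
  fix p q assume "p \<in> (\<lambda>t. x + real t *\<^sub>R v) ` T" "q \<in> (\<lambda>t. x + real t *\<^sub>R v) ` T"
  then obtain a b where "p = x + real a *\<^sub>R v" "q = x + real b *\<^sub>R v" by blast
  hence "p - q = (real a - real b) *\<^sub>R v" by (simp add: algebra_simps)
  thus "\<exists>c. p - q = c *\<^sub>R v" by blast
qed

section \<open>Edges are progressions with a primitive step\<close>

text \<open>Every nonzero lattice vector on a line through the origin is an integer multiple of one
  of minimal \<open>\<ell>\<^sub>1\<close>-norm: otherwise subtracting the integer part of the ratio would
  produce a shorter one.\<close>
lemma lattice_line_generator:
  fixes u :: "real^'k::finite"
  assumes "z0 \<noteq> (\<lambda>_. 0)" "\<exists>c. vec_of_int z0 = c *\<^sub>R u"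
  obtains w where "w \<noteq> (\<lambda>_. 0)"
    "\<And>z. \<exists>c. vec_of_int z = c *\<^sub>R u \<Longrightarrow> \<exists>a::int. z = (\<lambda>i. a * w i)"
proof -
  define norm1 where "norm1 z = (\<Sum>i\<in>UNIV. nat \<bar>z i\<bar>)" for z :: "'k \<Rightarrow> int"
  have real_norm1: "real (norm1 z) = (\<Sum>i\<in>UNIV. \<bar>real_of_int (z i)\<bar>)" for z
    by (simp add: norm1_def of_nat_sum)
  let ?C = "\<lambda>z. z \<noteq> (\<lambda>_. 0) \<and> (\<exists>c. vec_of_int z = c *\<^sub>R u)"
  obtain w where w: "?C w" and w_min: "\<And>y. ?C y \<Longrightarrow> norm1 w \<le> norm1 y"
    using ex_has_least_nat[of ?C z0 norm1] assms by blast
  obtain s where s: "vec_of_int w = s *\<^sub>R u" using w by blast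
  have "s \<noteq> 0" using s w vec_of_int_eq_0_iff by fastforce
  obtain j where "w j \<noteq> 0" using w by (auto simp: fun_eq_iff)
  hence "0 < \<bar>real_of_int (w j)\<bar>" by simp
  also have "\<dots> \<le> real (norm1 w)" unfolding real_norm1 by (rule member_le_sum) auto
  finally have norm1_pos: "0 < real (norm1 w)" .
  have "\<exists>a::int. z = (\<lambda>i. a * w i)" if on_line: "\<exists>c. vec_of_int z = c *\<^sub>R u" for z
  proof -
    obtain c where c: "vec_of_int z = c *\<^sub>R u" using on_line by blast
    define a where "a = c / s"
    define z' where "z' i = z i - \<lfloor>a\<rfloor> * w i" for i
    have z'_eq: "real_of_int (z' i) = (a - \<lfloor>a\<rfloor>) * real_of_int (w i)" for i
      using arg_cong[OF c, of "\<lambda>v. v $ i"] arg_cong[OF s, of "\<lambda>v. v $ i"] \<open>s \<noteq> 0\<close>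
      by (simp add: z'_def a_def algebra_simps)
    have frac: "0 \<le> a - \<lfloor>a\<rfloor>" "a - \<lfloor>a\<rfloor> < 1" by linarith+
    have "z' = (\<lambda>_. 0)"
    proof (rule ccontr)
      assume "z' \<noteq> (\<lambda>_. 0)"
      moreover have "vec_of_int z' = ((a - \<lfloor>a\<rfloor>) * s) *\<^sub>R u"
        using z'_eq s by (simp add: vec_eq_iff)
      ultimately have "real (norm1 w) \<le> real (norm1 z')" using w_min by auto
      moreover have "real (norm1 z') = (a - \<lfloor>a\<rfloor>) * real (norm1 w)"
        using frac by (simp add: real_norm1 z'_eq abs_mult sum_distrib_left)
      ultimately show False using frac norm1_pos by (simp add: mult_le_cancel_right1)
    qed
    hence "z = (\<lambda>i. \<lfloor>a\<rfloor> * w i)" by (auto simp: z'_def fun_eq_iff)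
    thus ?thesis by blast
  qed
  with w that show ?thesis by blast
qed

lemma vec_of_int_in_grid_iff: "vec_of_int z \<in> grid n \<longleftrightarrow> z \<in> int_grid n"
  by (auto simp: grid_eq_image_int_grid)

lemma collinear_grid_integer_steps:
  fixes S :: "(real^'k::finite) set"
  assumes "S \<subseteq> grid n" "collinear S" "p \<in> S" "q \<in> S" "p \<noteq> q"
  obtains w where "w \<noteq> (\<lambda>_. 0)" "\<forall>y\<in>S. \<exists>a::int. y = p + of_int a *\<^sub>R vec_of_int w"
proof -
  obtain u where u: "\<forall>x\<in>S. \<forall>y\<in>S. \<exists>c. x - y = c *\<^sub>R u"
    using assms(2) by (auto simp: collinear_def)
  have "\<exists>d. vec_of_int d = y - p" if y: "y \<in> S" for y
  proof -
    have "y \<in> vec_of_int ` int_grid n" "p \<in> vec_of_int ` int_grid n"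
      using assms(1,3) y by (auto simp: grid_eq_image_int_grid)
    then obtain zy zp where "y = vec_of_int zy" "p = vec_of_int zp" by blast
    thus ?thesis using vec_of_int_diff by metis
  qed
  then obtain d where d: "\<And>y. y \<in> S \<Longrightarrow> vec_of_int (d y) = y - p" by metis
  have on_line: "\<exists>c. vec_of_int (d y) = c *\<^sub>R u" if y: "y \<in> S" for y
    using d u assms(3) y by metis
  have "d q \<noteq> (\<lambda>_. 0)" using d[OF assms(4)] assms(5) by (metis vec_of_int_eq_0_iff eq_iff_diff_eq_0)
  then obtain w where w: "w \<noteq> (\<lambda>_. 0)"
    and multiple: "\<And>z. \<exists>c. vec_of_int z = c *\<^sub>R u \<Longrightarrow> \<exists>a::int. z = (\<lambda>i. a * w i)"
    using lattice_line_generator on_line[OF assms(4)] by blast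
  have "\<exists>a::int. y = p + of_int a *\<^sub>R vec_of_int w" if y: "y \<in> S" for y
  proof -
    obtain a where "d y = (\<lambda>i. a * w i)" using multiple on_line[OF y] by blast
    hence "y - p = of_int a *\<^sub>R vec_of_int w" using d[OF y] vec_of_int_scale by metis
    thus ?thesis by (metis diff_add_cancel add.commute)
  qed
  with w that show ?thesis by blast
qed

lemma progression_from_int_steps:
  fixes v p :: "'a::real_vector"
  assumes "finite S" "S \<noteq> {}" "v \<noteq> 0" "\<forall>y\<in>S. \<exists>a::int. y = p + of_int a *\<^sub>R v"
  obtains x T where "x \<in> S" "0 \<in> T" "S = progression x v T"
proof -
  obtain F where F: "\<And>y. y \<in> S \<Longrightarrow> y = p + of_int (F y) *\<^sub>R v" using assms(4) by metis
  have "Min (F ` S) \<in> F ` S" using assms(1,2) by simp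
  then obtain x where x: "x \<in> S" "F x = Min (F ` S)" by force
  have F_min: "F x \<le> F y" if "y \<in> S" for y using x(2) assms(1) that by simp
  define T where "T = {t. x + real t *\<^sub>R v \<in> S}"
  have "y \<in> progression x v T" if y: "y \<in> S" for y
  proof -
    define t where "t = nat (F y - F x)"
    have "real t = of_int (F y - F x)" using F_min[OF y] by (simp add: t_def)
    have "x + real t *\<^sub>R v = p + (of_int (F x) + real t) *\<^sub>R v"
      using F[OF x(1)] by (simp add: scaleR_add_left)
    also have "\<dots> = p + of_int (F y) *\<^sub>R v" using \<open>real t = of_int (F y - F x)\<close> by simp
    also have "\<dots> = y" using F[OF y] by simp
    finally have "x + real t *\<^sub>R v = y" .
    thus ?thesis using y by (auto simp: progression_def T_def)
  qed
  hence "S = progression x v T" by (auto simp: progression_def T_def)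
  moreover have "0 \<in> T" using x(1) by (simp add: T_def)
  ultimately show ?thesis using x(1) that by blast
qed

lemma hedge_eq_progression:
  fixes S :: "(real^'k::finite) set"
  assumes "S \<in> hedges n r" "r \<ge> 2"
  obtains x w T where "x \<in> int_grid n" "w \<noteq> (\<lambda>_. 0)" "0 \<in> T" "card T = r"
    "S = progression (vec_of_int x) (vec_of_int w) T"
proof -
  have S: "S \<subseteq> grid n" "card S = r" "collinear S" using assms(1) by (auto simp: hedges_def)
  hence "finite S" using assms(2) card.infinite by fastforce
  have "2 \<le> card S" using S(2) assms(2) by simp
  then obtain p q where pq: "p \<in> S" "q \<in> S" "p \<noteq> q" by (rule two_le_card_obtains)
  obtain w where w: "w \<noteq> (\<lambda>_. 0)" "\<forall>y\<in>S. \<exists>a::int. y = p + of_int a *\<^sub>R vec_of_int w"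
    using collinear_grid_integer_steps[OF S(1,3) pq] by blast
  have v: "vec_of_int w \<noteq> 0" using w(1) vec_of_int_eq_0_iff by blast
  obtain x0 T where x0T: "x0 \<in> S" "0 \<in> T" "S = progression x0 (vec_of_int w) T"
    using progression_from_int_steps[OF \<open>finite S\<close> _ v w(2)] pq(1) by blast
  obtain x where "x \<in> int_grid n" "x0 = vec_of_int x"
    using S(1) x0T(1) by (auto simp: grid_eq_image_int_grid)
  moreover have "card T = r" using x0T(3) S(2) card_progression[OF v] by simp
  ultimately show ?thesis using that w(1) x0T by blast
qed

lemma progression_in_grid_step_le:
  assumes "progression (vec_of_int x) (vec_of_int w) T \<subseteq> grid n" "x \<in> int_grid n" "t \<in> T"
  shows "int t * \<bar>w i\<bar> \<le> int n - 1"
proof -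
  have "vec_of_int x + real t *\<^sub>R vec_of_int w = vec_of_int (\<lambda>i. x i + int t * w i)"
    by (simp add: vec_eq_iff)
  hence "(\<lambda>i. x i + int t * w i) \<in> int_grid n"
    using assms(1,3) by (auto simp: progression_def simp flip: vec_of_int_in_grid_iff)
  thus ?thesis using assms(2) by (auto simp: mem_int_grid_iff abs_mult dest!: spec[of _ i])
qed

section \<open>Counting edges from above\<close>

definition int_cube :: "nat \<Rightarrow> ('k \<Rightarrow> int) set" where
  "int_cube m = PiE UNIV (\<lambda>_. {- int m..int m})"

lemma mem_int_cube_iff: "w \<in> int_cube m \<longleftrightarrow> (\<forall>i. \<bar>w i\<bar> \<le> int m)"
proof -
  have "a \<in> {- int m..int m} \<longleftrightarrow> \<bar>a\<bar> \<le> int m" for a by auto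
  thus ?thesis by (simp add: int_cube_def PiE_UNIV_domain Pi_iff)
qed

lemma finite_int_cube: "finite (int_cube m :: ('k::finite \<Rightarrow> int) set)"
  by (simp add: int_cube_def finite_PiE)

lemma card_int_cube: "card (int_cube m :: ('k::finite \<Rightarrow> int) set) = (2 * m + 1) ^ CARD('k)"
proof -
  have "nat (2 * int m + 1) = 2 * m + 1" by linarith
  thus ?thesis by (simp add: int_cube_def card_PiE)
qed

lemma int_cube_mono: "m' \<le> m \<Longrightarrow> int_cube m' \<subseteq> int_cube m"
  unfolding subset_iff mem_int_cube_iff by (meson of_nat_mono order_trans)

definition cube_shell :: "nat \<Rightarrow> ('k \<Rightarrow> int) set" where
  "cube_shell m = int_cube m - int_cube (m - 1)"

lemma finite_cube_shell: "finite (cube_shell m :: ('k::finite \<Rightarrow> int) set)"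
  by (simp add: cube_shell_def finite_int_cube)

lemma real_card_cube_shell:
  assumes "m \<ge> 1"
  shows "real (card (cube_shell m :: ('k::finite \<Rightarrow> int) set))
           = (2 * real m + 1) ^ CARD('k) - (2 * real m - 1) ^ CARD('k)"
proof -
  let ?cube = "int_cube :: nat \<Rightarrow> ('k \<Rightarrow> int) set"
  have sub: "?cube (m - 1) \<subseteq> ?cube m" by (simp add: int_cube_mono)
  have "card (cube_shell m :: ('k \<Rightarrow> int) set) = card (?cube m) - card (?cube (m - 1))"
    unfolding cube_shell_def by (rule card_Diff_subset[OF finite_int_cube sub])
  moreover have "card (?cube (m - 1)) \<le> card (?cube m)" by (rule card_mono[OF finite_int_cube sub])
  ultimately have "real (card (cube_shell m :: ('k \<Rightarrow> int) set))
                     = real (card (?cube m)) - real (card (?cube (m - 1)))"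
    by (simp add: of_nat_diff)
  also have "\<dots> = (2 * real m + 1) ^ CARD('k) - (2 * real m - 1) ^ CARD('k)"
    using assms by (simp add: card_int_cube of_nat_diff add.commute)
  finally show ?thesis .
qed

definition anchored_sets :: "nat \<Rightarrow> nat \<Rightarrow> nat set set" where
  "anchored_sets q r = {T. T \<subseteq> {0..q} \<and> 0 \<in> T \<and> card T = r}"

lemma finite_anchored_sets: "finite (anchored_sets q r)"
  by (rule finite_subset[of _ "Pow {0..q}"]) (auto simp: anchored_sets_def)

lemma card_anchored_sets_le: "card (anchored_sets q r) \<le> q choose (r - 1)"
proof -
  let ?U = "{U. U \<subseteq> {1..q} \<and> card U = r - 1}"
  have "anchored_sets q r \<subseteq> insert 0 ` ?U"
  proof
    fix T assume "T \<in> anchored_sets q r"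
    hence T: "T \<subseteq> {0..q}" "0 \<in> T" "card T = r" by (auto simp: anchored_sets_def)
    hence "T - {0} \<in> ?U" using finite_subset[OF T(1)] by auto
    moreover have "T = insert 0 (T - {0})" using T(2) by auto
    ultimately show "T \<in> insert 0 ` ?U" by blast
  qed
  hence "card (anchored_sets q r) \<le> card (insert 0 ` ?U)"
    by (intro card_mono finite_imageI) (auto simp: n_subsets)
  also have "\<dots> \<le> card ?U" by (rule card_image_le) simp
  finally show ?thesis by (simp add: n_subsets)
qed

text \<open>An edge is coded by its first point \<open>x\<close>, the sup-norm \<open>m\<close> of its primitive step
  \<open>w\<close>, and the set \<open>T\<close> of multiples of \<open>w\<close> it uses; all multiples are at most
  \<open>(n - 1) div m\<close> because the edge stays inside the grid.\<close>
definition edge_codes :: "nat \<Rightarrow> nat \<Rightarrow> (('k \<Rightarrow> int) \<times> nat \<times> ('k \<Rightarrow> int) \<times> nat set) set" where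
  "edge_codes n r =
     int_grid n \<times> (SIGMA m:{1..n - 1}. cube_shell m \<times> anchored_sets ((n - 1) div m) r)"

definition edge_of_code :: "('k \<Rightarrow> int) \<times> nat \<times> ('k \<Rightarrow> int) \<times> nat set \<Rightarrow> (real^'k) set" where
  "edge_of_code = (\<lambda>(x, m, w, T). progression (vec_of_int x) (vec_of_int w) T)"

lemma finite_edge_codes: "finite (edge_codes n r :: (('k::finite \<Rightarrow> int) \<times> _) set)"
  by (simp add: edge_codes_def finite_int_grid finite_cube_shell finite_anchored_sets)

lemma card_edge_codes:
  "card (edge_codes n r :: (('k::finite \<Rightarrow> int) \<times> _) set) =
     n ^ CARD('k) * (\<Sum>m\<in>{1..n - 1}.
        card (cube_shell m :: ('k \<Rightarrow> int) set) * card (anchored_sets ((n - 1) div m) r))"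
  by (simp add: edge_codes_def card_cartesian_product card_SigmaI card_int_grid
      finite_cube_shell finite_anchored_sets)

lemma hedges_subset_edge_codes_image:
  assumes "r \<ge> 2"
  shows "hedges n r \<subseteq> edge_of_code ` (edge_codes n r :: (('k::finite \<Rightarrow> int) \<times> _) set)"
proof
  fix S :: "(real^'k) set" assume S: "S \<in> hedges n r"
  obtain x w T where xwT: "x \<in> int_grid n" "w \<noteq> (\<lambda>_. 0)" "0 \<in> T" "card T = r"
    and S_eq: "S = progression (vec_of_int x) (vec_of_int w) T"
    using hedge_eq_progression[OF S assms] by blast
  have "Max (range (\<lambda>i. \<bar>w i\<bar>)) \<in> range (\<lambda>i. \<bar>w i\<bar>)" by simp
  then obtain i0 where "\<bar>w i0\<bar> = Max (range (\<lambda>i. \<bar>w i\<bar>))" by force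
  hence i0: "\<And>i. \<bar>w i\<bar> \<le> \<bar>w i0\<bar>" by simp
  define m where "m = nat \<bar>w i0\<bar>"
  obtain j where "w j \<noteq> 0" using xwT(2) by (auto simp: fun_eq_iff)
  hence m1: "m \<ge> 1" using i0[of j] by (simp add: m_def)
  have "w \<in> cube_shell m"
    using i0 m1 by (auto simp: cube_shell_def mem_int_cube_iff m_def intro: exI[of _ i0])
  have step: "t * m \<le> n - 1" if t: "t \<in> T" for t
  proof -
    have "int t * \<bar>w i0\<bar> \<le> int n - 1"
      using progression_in_grid_step_le[OF _ xwT(1) t] S S_eq by (simp add: hedges_def)
    moreover have "int (t * m) = int t * \<bar>w i0\<bar>" by (simp add: m_def)
    ultimately show ?thesis by linarith
  qed
  hence "T \<in> anchored_sets ((n - 1) div m) r"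
    using xwT(3,4) m1 by (auto simp: anchored_sets_def less_eq_div_iff_mult_less_eq)
  moreover have "m \<le> n - 1"
  proof -
    have "T \<noteq> {0}" using xwT(4) assms by auto
    then obtain t where t: "t \<in> T" "t \<noteq> 0" using xwT(3) by blast
    hence "1 * m \<le> t * m" by (intro mult_le_mono1) simp
    thus ?thesis using step[OF t(1)] by linarith
  qed
  ultimately have "(x, m, w, T) \<in> edge_codes n r"
    using xwT(1) m1 \<open>w \<in> cube_shell m\<close> by (simp add: edge_codes_def)
  thus "S \<in> edge_of_code ` edge_codes n r" using S_eq by (force simp: edge_of_code_def)
qed

lemma card_hedges_le_code_count:
  assumes "r \<ge> 2"
  shows "card (hedges n r :: (real^'k::finite) set set) \<le>
    n ^ CARD('k) * (\<Sum>m\<in>{1..n - 1}. card (cube_shell m :: ('k \<Rightarrow> int) set) * ((n - 1) div m choose (r - 1)))"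
proof -
  have "card (hedges n r :: (real^'k) set set) \<le> card (edge_of_code ` (edge_codes n r :: (('k \<Rightarrow> int) \<times> _) set))"
    by (rule card_mono[OF finite_imageI[OF finite_edge_codes] hedges_subset_edge_codes_image[OF assms]])
  also have "\<dots> \<le> card (edge_codes n r :: (('k \<Rightarrow> int) \<times> _) set)"
    by (rule card_image_le[OF finite_edge_codes])
  also have "\<dots> \<le> n ^ CARD('k) * (\<Sum>m\<in>{1..n - 1}. card (cube_shell m :: ('k \<Rightarrow> int) set) * ((n - 1) div m choose (r - 1)))"
    unfolding card_edge_codes by (intro mult_left_mono sum_mono card_anchored_sets_le) auto
  finally show ?thesis .
qed

lemma power_diff_le:
  fixes a b :: real
  assumes "0 \<le> b" "b \<le> a"
  shows "a ^ k - b ^ k \<le> real k * a ^ (k - 1) * (a - b)"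
proof (induction k)
  case (Suc k)
  have "a ^ Suc k - b ^ Suc k = a * (a ^ k - b ^ k) + b ^ k * (a - b)" by (simp add: algebra_simps)
  also have "\<dots> \<le> a * (real k * a ^ (k - 1) * (a - b)) + a ^ k * (a - b)"
    using Suc assms by (intro add_mono mult_left_mono mult_right_mono power_mono) auto
  also have "\<dots> = real (Suc k) * a ^ k * (a - b)" by (cases k) (auto simp: algebra_simps)
  finally show ?case by simp
qed simp

lemma binomial_div_le:
  assumes "m \<ge> 1"
  shows "real ((n - 1) div m choose s) \<le> (real n / real m) ^ s / fact s"
proof -
  define q where "q = (n - 1) div m"
  have "real (q choose s) * fact s \<le> real q ^ s"
    by (metis binomial_fact_pow of_nat_fact of_nat_le_iff of_nat_mult of_nat_power)
  hence "real (q choose s) \<le> real q ^ s / fact s" by (simp add: field_simps)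
  moreover have "q * m \<le> n" using div_times_less_eq_dividend[of "n - 1" m] unfolding q_def by linarith
  hence "real q \<le> real n / real m" using assms by (simp add: field_simps flip: of_nat_mult)
  hence "real q ^ s / fact s \<le> (real n / real m) ^ s / fact s"
    by (intro divide_right_mono power_mono) auto
  ultimately show ?thesis by (simp add: q_def)
qed

lemma card_hedges_le_weighted_sum:
  assumes "r \<ge> 2"
  shows "real (card (hedges n r :: (real^'k::finite) set set)) \<le>
    2 * real CARD('k) * real n ^ (CARD('k) + r - 1) / fact (r - 1) *
    (\<Sum>m\<in>{1..n - 1}. (2 * real m + 1) ^ (CARD('k) - 1) / real m ^ (r - 1))"
proof -
  let ?k = "CARD('k)"
  have term_le: "real (card (cube_shell m :: ('k \<Rightarrow> int) set)) * real ((n - 1) div m choose (r - 1))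
      \<le> 2 * real ?k * real n ^ (r - 1) / fact (r - 1) * ((2 * real m + 1) ^ (?k - 1) / real m ^ (r - 1))"
    if m: "m \<in> {1..n - 1}" for m
  proof -
    have "real m \<ge> 1" using m by auto
    hence "real (card (cube_shell m :: ('k \<Rightarrow> int) set)) \<le> real ?k * (2 * real m + 1) ^ (?k - 1) * 2"
      using power_diff_le[of "2 * real m - 1" "2 * real m + 1" ?k] m by (simp add: real_card_cube_shell)
    hence "real (card (cube_shell m :: ('k \<Rightarrow> int) set)) * real ((n - 1) div m choose (r - 1))
        \<le> (real ?k * (2 * real m + 1) ^ (?k - 1) * 2) * ((real n / real m) ^ (r - 1) / fact (r - 1))"
      using binomial_div_le m by (intro mult_mono) auto
    thus ?thesis by (simp add: power_divide field_simps)
  qed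
  have "real (card (hedges n r :: (real^'k) set set)) \<le> real n ^ ?k *
      (\<Sum>m\<in>{1..n - 1}. real (card (cube_shell m :: ('k \<Rightarrow> int) set)) * real ((n - 1) div m choose (r - 1)))"
    using of_nat_mono[OF card_hedges_le_code_count[OF assms]] by (simp add: of_nat_sum)
  also have "\<dots> \<le> real n ^ ?k * (\<Sum>m\<in>{1..n - 1}. 2 * real ?k * real n ^ (r - 1) / fact (r - 1) *
      ((2 * real m + 1) ^ (?k - 1) / real m ^ (r - 1)))"
    by (intro mult_left_mono sum_mono term_le) auto
  also have "\<dots> = 2 * real ?k * (real n ^ ?k * real n ^ (r - 1)) / fact (r - 1) *
      (\<Sum>m\<in>{1..n - 1}. (2 * real m + 1) ^ (?k - 1) / real m ^ (r - 1))"
    by (simp add: sum_distrib_left mult_ac)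
  also have "real n ^ ?k * real n ^ (r - 1) = real n ^ (?k + r - 1)"
    using assms by (simp add: power_add[symmetric])
  finally show ?thesis .
qed

section \<open>The shell sum in the three regimes\<close>

lemma exp_half_le_two: "exp (1/2 :: real) \<le> 2"
proof -
  have "exp (1/2 :: real) ^ 2 = exp 1" by (simp flip: exp_of_nat_mult)
  also have "\<dots> \<le> 2 ^ 2" using exp_le by simp
  finally show ?thesis by (rule power2_le_imp_le) simp
qed

lemma two_mul_add_one_power_le:
  fixes m :: real
  assumes "k \<ge> 1" "real k \<le> m"
  shows "(2 * m + 1) ^ (k - 1) \<le> 2 ^ k * m ^ (k - 1)"
proof -
  have "(1 + 1 / (2 * m)) ^ (k - 1) \<le> exp (1 / (2 * m)) ^ (k - 1)"
    using assms by (intro power_mono) (auto simp: add.commute exp_ge_add_one_self)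
  also have "\<dots> = exp (real (k - 1) * (1 / (2 * m)))" by (simp flip: exp_of_nat_mult)
  also have "\<dots> \<le> exp (1/2)" using assms by (auto simp: field_simps)
  also have "\<dots> \<le> 2" by (rule exp_half_le_two)
  finally have "(1 + 1 / (2 * m)) ^ (k - 1) \<le> 2" .
  have "2 * m + 1 = (2 * m) * (1 + 1 / (2 * m))" using assms by (simp add: field_simps)
  hence "(2 * m + 1) ^ (k - 1) = (2 * m) ^ (k - 1) * (1 + 1 / (2 * m)) ^ (k - 1)"
    by (simp add: power_mult_distrib)
  also have "\<dots> \<le> (2 * m) ^ (k - 1) * 2"
    using \<open>(1 + 1 / (2 * m)) ^ (k - 1) \<le> 2\<close> assms by (intro mult_left_mono) auto
  also have "\<dots> = 2 ^ k * m ^ (k - 1)" using assms by (cases k) (auto simp: power_mult_distrib)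
  finally show ?thesis .
qed

lemma sum_if_less_le:
  fixes c :: real
  assumes "c \<ge> 0"
  shows "(\<Sum>m\<in>{1..N}. if m < k then c else 0) \<le> real k * c"
proof -
  have "(\<Sum>m\<in>{1..N}. if m < k then c else 0) = real (card ({1..N} \<inter> {..<k})) * c"
    by (simp add: sum.If_cases Int_def)
  also have "\<dots> \<le> real k * c"
    using assms card_mono[of "{..<k}" "{1..N} \<inter> {..<k}"] by (intro mult_right_mono) auto
  finally show ?thesis .
qed

text \<open>For \<open>m \<ge> k\<close> the shell factor \<open>(2m + 1)\<^sup>k\<^sup>-\<^sup>1\<close> is at most \<open>2\<^sup>k m\<^sup>k\<^sup>-\<^sup>1\<close> because
  \<open>(1 + 1/2m)\<^sup>k\<^sup>-\<^sup>1 \<le> e\<^sup>1\<^sup>/\<^sup>2\<close>; the fewer than \<open>k\<close> smaller \<open>m\<close> are handled by \<open>(3m)\<^sup>k\<^sup>-\<^sup>1\<close>.\<close>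
lemma sum_shell_factor_div_le:
  fixes g :: "nat \<Rightarrow> real"
  assumes "k \<ge> 1" "B \<ge> 0" "\<And>m. m \<in> {1..N} \<Longrightarrow> g m > 0"
    and "\<And>m. m \<in> {1..N} \<Longrightarrow> real m ^ (k - 1) / g m \<le> B"
  shows "(\<Sum>m\<in>{1..N}. (2 * real m + 1) ^ (k - 1) / g m)
           \<le> 2 ^ k * (\<Sum>m\<in>{1..N}. real m ^ (k - 1) / g m) + real k * 3 ^ (k - 1) * B"
proof -
  have term_le: "(2 * real m + 1) ^ (k - 1) / g m
      \<le> 2 ^ k * (real m ^ (k - 1) / g m) + (if m < k then 3 ^ (k - 1) * B else 0)"
    if m: "m \<in> {1..N}" for m
  proof (cases "k \<le> m")
    case True
    hence "(2 * real m + 1) ^ (k - 1) \<le> 2 ^ k * real m ^ (k - 1)"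
      using m assms(1) by (intro two_mul_add_one_power_le) auto
    thus ?thesis using True assms(3)[OF m] by (simp add: divide_right_mono)
  next
    case False
    have "(2 * real m + 1) ^ (k - 1) \<le> (3 * real m) ^ (k - 1)" using m by (intro power_mono) auto
    hence "(2 * real m + 1) ^ (k - 1) / g m \<le> 3 ^ (k - 1) * (real m ^ (k - 1) / g m)"
      using assms(3)[OF m] by (simp add: divide_right_mono power_mult_distrib)
    also have "\<dots> \<le> 3 ^ (k - 1) * B" using assms(4)[OF m] by (intro mult_left_mono) auto
    finally show ?thesis using False assms(3)[OF m] m by (simp add: add_increasing)
  qed
  have "(\<Sum>m\<in>{1..N}. (2 * real m + 1) ^ (k - 1) / g m)
      \<le> (\<Sum>m\<in>{1..N}. 2 ^ k * (real m ^ (k - 1) / g m) + (if m < k then 3 ^ (k - 1) * B else 0))"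
    by (rule sum_mono) (rule term_le)
  also have "\<dots> \<le> 2 ^ k * (\<Sum>m\<in>{1..N}. real m ^ (k - 1) / g m) + real k * (3 ^ (k - 1) * B)"
    using sum_if_less_le[where c = "3 ^ (k - 1) * B" and N = N and k = k] assms(2) by (simp add: sum.distrib sum_distrib_left)
  finally show ?thesis by (simp add: mult_ac)
qed

lemma sum_inverse_le_one_plus_ln: "N \<ge> 1 \<Longrightarrow> (\<Sum>m\<in>{1..N}. 1 / real m) \<le> 1 + ln (real N)"
proof (induction N rule: nat_induct_at_least)
  case (Suc N)
  have "ln (real N / real (Suc N)) \<le> real N / real (Suc N) - 1"
    using Suc by (intro ln_le_minus_one) auto
  hence "1 / real (Suc N) \<le> ln (real (Suc N)) - ln (real N)"
    using Suc by (simp add: ln_div field_simps)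
  moreover have "(\<Sum>m\<in>{1..Suc N}. 1 / real m) = (\<Sum>m\<in>{1..N}. 1 / real m) + 1 / real (Suc N)"
    by simp
  ultimately show ?case using Suc.IH by linarith
qed simp

lemma sum_inverse_square_le: "N \<ge> 1 \<Longrightarrow> (\<Sum>m\<in>{1..N}. 1 / real m ^ 2) \<le> 2 - 1 / real N"
proof (induction N rule: nat_induct_at_least)
  case (Suc N)
  have "1 / real (Suc N) ^ 2 \<le> 1 / (real N * real (Suc N))"
    using Suc by (intro divide_left_mono) (auto simp: power2_eq_square intro: mult_right_mono)
  also have "\<dots> = 1 / real N - 1 / real (Suc N)" using Suc by (simp add: field_simps)
  finally have "1 / real (Suc N) ^ 2 \<le> 1 / real N - 1 / real (Suc N)" .
  moreover have "(\<Sum>m\<in>{1..Suc N}. 1 / real m ^ 2) = (\<Sum>m\<in>{1..N}. 1 / real m ^ 2) + 1 / real (Suc N) ^ 2"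
    by simp
  ultimately show ?case using Suc.IH by linarith
qed simp

lemma Suc_mul_three_pow_le: "(k + 1) * 3 ^ k \<le> 2 * (4::nat) ^ k"
proof (induction k)
  case (Suc k)
  show ?case
  proof (cases "k \<ge> 2")
    case True
    have "(Suc k + 1) * 3 ^ Suc k \<le> 4 * ((k + 1) * 3 ^ k)" using True by simp
    also have "\<dots> \<le> 4 * (2 * 4 ^ k)" using Suc.IH by simp
    finally show ?thesis by simp
  next
    case False
    hence "k = 0 \<or> k = 1" by auto
    thus ?thesis by auto
  qed
qed simp

lemma mul_three_pow_le_two_pow:
  assumes "k \<ge> 1" "r \<ge> k + 2"
  shows "r * 3 ^ (k - 1) \<le> (2::nat) ^ (r + k - 1)"
proof -
  have "(k + 2 + d) * 3 ^ (k - 1) \<le> (2::nat) ^ (2 * k + 1 + d)" for d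
  proof (induction d)
    case 0
    have "(k + 2) * 3 ^ (k - 1) \<le> (k + 1) * 3 ^ k" using assms(1) by (cases k) auto
    also have "\<dots> \<le> 2 ^ (2 * k + 1)" using Suc_mul_three_pow_le[of k] by (simp add: power_mult)
    finally show ?case by simp
  next
    case (Suc d)
    thus ?case by simp
  qed
  moreover have "k + 2 + (r - k - 2) = r" "2 * k + 1 + (r - k - 2) = r + k - 1" using assms by auto
  ultimately show ?thesis by metis
qed

lemma eight_mul_le_two_pow: "r \<ge> 3 \<Longrightarrow> 8 * r \<le> 3 * (2::nat) ^ r"
  by (induction r rule: nat_induct_at_least) simp_all

lemma double_Suc_le_two_pow: "k \<ge> 3 \<Longrightarrow> 2 * (k + 1) \<le> (2::nat) ^ k"
  by (induction k rule: nat_induct_at_least) simp_all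

lemma shell_sum_le_small_r:
  assumes "1 \<le> r" "r \<le> k" "8 ^ k \<le> real n"
  shows "(\<Sum>m\<in>{1..n - 1}. (2 * real m + 1) ^ (k - 1) / real m ^ (r - 1))
           \<le> 4/3 * 2 ^ k * real n ^ (k - r + 1)"
proof -
  let ?P = "real n ^ (k - r)"
  have quot: "real m ^ (k - 1) / real m ^ (r - 1) = real m ^ (k - r)" if "m \<in> {1..n - 1}" for m
    using that assms power_diff[of "real m" "r - 1" "k - 1"] by (simp add: diff_diff_eq)
  have quot_le: "real m ^ (k - r) \<le> ?P" if "m \<in> {1..n - 1}" for m
    using that by (intro power_mono) auto
  have split: "(\<Sum>m\<in>{1..n - 1}. (2 * real m + 1) ^ (k - 1) / real m ^ (r - 1))
      \<le> 2 ^ k * (\<Sum>m\<in>{1..n - 1}. real m ^ (k - 1) / real m ^ (r - 1)) + real k * 3 ^ (k - 1) * ?P"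
    using assms quot quot_le by (intro sum_shell_factor_div_le) auto
  have "(\<Sum>m\<in>{1..n - 1}. real m ^ (k - 1) / real m ^ (r - 1)) \<le> (\<Sum>m\<in>{1..n - 1}. ?P)"
    using quot quot_le by (intro sum_mono) auto
  also have "\<dots> \<le> real n * ?P" by (simp add: mult_right_mono)
  finally have main: "2 ^ k * (\<Sum>m\<in>{1..n - 1}. real m ^ (k - 1) / real m ^ (r - 1)) \<le> 2 ^ k * (real n * ?P)"
    by (rule mult_left_mono) simp
  have "real k \<le> 2 ^ k"
    by (metis less_exp less_imp_le of_nat_le_iff of_nat_numeral of_nat_power)
  hence "real k * 3 ^ k \<le> 2 ^ k * 3 ^ k" by (rule mult_right_mono) simp
  also have "\<dots> = 6 ^ k" by (simp flip: power_mult_distrib)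
  also have "\<dots> \<le> 8 ^ k" by (rule power_mono) auto
  also have "\<dots> \<le> real n" by (rule assms(3))
  also have "\<dots> \<le> 2 ^ k * real n" by (simp add: mult_le_cancel_right1)
  finally have "real k * 3 ^ k \<le> 2 ^ k * real n" .
  moreover have "real k * 3 ^ k = 3 * (real k * 3 ^ (k - 1))" using assms by (cases k) auto
  ultimately have "real k * 3 ^ (k - 1) \<le> 1/3 * 2 ^ k * real n" by linarith
  hence small: "real k * 3 ^ (k - 1) * ?P \<le> 1/3 * 2 ^ k * real n * ?P"
    by (rule mult_right_mono) simp
  have "(\<Sum>m\<in>{1..n - 1}. (2 * real m + 1) ^ (k - 1) / real m ^ (r - 1))
      \<le> 2 ^ k * (real n * ?P) + 1/3 * 2 ^ k * real n * ?P"
    using split main small by linarith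
  also have "\<dots> = 4/3 * 2 ^ k * (real n * ?P)" by (simp add: algebra_simps)
  also have "real n * ?P = real n ^ (k - r + 1)" by simp
  finally show ?thesis .
qed

lemma ln_le_log2: "x \<ge> 1 \<Longrightarrow> ln x \<le> log 2 x"
  using ln_2_less_1 ln_ge_zero[of x] by (simp add: log_def field_simps mult_left_le)

lemma sum_inverse_le_one_plus_log2: "n \<ge> 2 \<Longrightarrow> (\<Sum>m\<in>{1..n - 1}. 1 / real m) \<le> 1 + log 2 (real n)"
proof -
  assume n: "n \<ge> 2"
  have "(\<Sum>m\<in>{1..n - 1}. 1 / real m) \<le> 1 + ln (real (n - 1))" using n by (intro sum_inverse_le_one_plus_ln) auto
  also have "ln (real (n - 1)) \<le> ln (real n)" using n by simp
  also have "ln (real n) \<le> log 2 (real n)" using n by (intro ln_le_log2) auto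
  finally show ?thesis by simp
qed

lemma Suc_mul_two_pow_le: "k \<ge> 3 \<Longrightarrow> real (k + 1) * 2 ^ k \<le> 4 ^ k / 2"
proof -
  assume "k \<ge> 3"
  hence "real (2 * (k + 1)) \<le> real (2 ^ k)" by (rule of_nat_mono[OF double_Suc_le_two_pow])
  hence "(2 * real (k + 1)) * 2 ^ k \<le> 2 ^ k * 2 ^ k" by (intro mult_right_mono) simp_all
  also have "(2::real) ^ k * 2 ^ k = 4 ^ k" by (simp flip: power_mult_distrib)
  finally show ?thesis by (simp add: field_simps)
qed

lemma Suc_mul_three_pow_pred_le: "k \<ge> 1 \<Longrightarrow> real (k + 1) * 3 ^ (k - 1) \<le> 2/3 * 4 ^ k"
proof -
  assume "k \<ge> 1"
  have "real ((k + 1) * 3 ^ k) \<le> real (2 * 4 ^ k)" by (rule of_nat_mono[OF Suc_mul_three_pow_le])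
  hence "real (k + 1) * 3 ^ k \<le> 2 * 4 ^ k" by (simp only: of_nat_mult of_nat_power of_nat_numeral)
  moreover have "(3::real) ^ k = 3 * 3 ^ (k - 1)" using \<open>k \<ge> 1\<close> by (cases k) auto
  ultimately show ?thesis by simp
qed

lemma shell_sum_le_critical_r:
  assumes "k \<ge> 3" "n \<ge> 2" "100 * real k \<le> log 2 (real n)"
  shows "real (k + 1) * (\<Sum>m\<in>{1..n - 1}. (2 * real m + 1) ^ (k - 1) / real m ^ k)
           \<le> 4 ^ k * log 2 (real n)"
proof -
  let ?L = "log 2 (real n)"
  let ?S = "\<Sum>m\<in>{1..n - 1}. (2 * real m + 1) ^ (k - 1) / real m ^ k"
  have quot: "real m ^ (k - 1) / real m ^ k = 1 / real m" if "m \<in> {1..n - 1}" for m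
  proof -
    have "real m ^ k = real m ^ (k - 1) * real m" using assms by (cases k) auto
    thus ?thesis using that by simp
  qed
  have harmonic: "(\<Sum>m\<in>{1..n - 1}. real m ^ (k - 1) / real m ^ k) \<le> 1 + ?L"
    using quot sum_inverse_le_one_plus_log2[OF assms(2)] by simp
  have "?S \<le> 2 ^ k * (\<Sum>m\<in>{1..n - 1}. real m ^ (k - 1) / real m ^ k) + real k * 3 ^ (k - 1) * 1"
    using assms quot by (intro sum_shell_factor_div_le) auto
  also have "\<dots> \<le> 2 ^ k * (1 + ?L) + real k * 3 ^ (k - 1)"
    using mult_left_mono[OF harmonic, of "2 ^ k"] by simp
  finally have "real (k + 1) * ?S \<le> real (k + 1) * (2 ^ k * (1 + ?L) + real k * 3 ^ (k - 1))"
    by (rule mult_left_mono) simp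
  also have "\<dots> = (real (k + 1) * 2 ^ k) * (1 + ?L) + real k * (real (k + 1) * 3 ^ (k - 1))"
    by (simp add: algebra_simps)
  also have "\<dots> \<le> (4 ^ k / 2) * (1 + ?L) + real k * (2/3 * 4 ^ k)"
    using Suc_mul_two_pow_le[OF assms(1)] Suc_mul_three_pow_pred_le[of k] assms
    by (intro add_mono mult_right_mono mult_left_mono) auto
  also have "\<dots> \<le> 4 ^ k * ?L"
  proof -
    have "(1 + ?L) / 2 + real k * (2/3) \<le> ?L" using assms by (simp add: field_simps)
    hence "4 ^ k * ((1 + ?L) / 2 + real k * (2/3)) \<le> 4 ^ k * ?L" by (rule mult_left_mono) simp
    thus ?thesis by (simp add: algebra_simps)
  qed
  finally show ?thesis .
qed

lemma shell_sum_le_large_r: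
  assumes "k \<ge> 1" "r \<ge> k + 2"
  shows "(\<Sum>m\<in>{1..N}. (2 * real m + 1) ^ (k - 1) / real m ^ (r - 1)) \<le> 2 * 3 ^ (k - 1)"
proof (cases "N \<ge> 1")
  case True
  have "(2 * real m + 1) ^ (k - 1) / real m ^ (r - 1) \<le> 3 ^ (k - 1) * (1 / real m ^ 2)"
    if m: "m \<in> {1..N}" for m
  proof -
    have m1: "real m \<ge> 1" using m by auto
    have "(2 * real m + 1) ^ (k - 1) \<le> 3 ^ (k - 1) * real m ^ (k - 1)"
      using m1 power_mono[of "2 * real m + 1" "3 * real m" "k - 1"] by (simp add: power_mult_distrib)
    hence "(2 * real m + 1) ^ (k - 1) / real m ^ (r - 1) \<le> 3 ^ (k - 1) * real m ^ (k - 1) / real m ^ (r - 1)"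
      by (rule divide_right_mono) simp
    also have "\<dots> \<le> 3 ^ (k - 1) * real m ^ (k - 1) / (real m ^ (k - 1) * real m ^ 2)"
    proof (rule divide_left_mono)
      have "real m ^ (k - 1) * real m ^ 2 = real m ^ (k - 1 + 2)" by (simp only: power_add)
      also have "\<dots> \<le> real m ^ (r - 1)" using m1 assms by (intro power_increasing) auto
      finally show "real m ^ (k - 1) * real m ^ 2 \<le> real m ^ (r - 1)" .
    qed (use m1 in auto)
    also have "\<dots> = 3 ^ (k - 1) * (1 / real m ^ 2)" using m1 by (simp add: field_simps)
    finally show ?thesis .
  qed
  hence "(\<Sum>m\<in>{1..N}. (2 * real m + 1) ^ (k - 1) / real m ^ (r - 1))
      \<le> (\<Sum>m\<in>{1..N}. 3 ^ (k - 1) * (1 / real m ^ 2))"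
    by (rule sum_mono)
  also have "\<dots> = 3 ^ (k - 1) * (\<Sum>m\<in>{1..N}. 1 / real m ^ 2)" by (simp add: sum_distrib_left)
  also have "\<dots> \<le> 3 ^ (k - 1) * 2"
  proof (rule mult_left_mono)
    have "0 \<le> 1 / real N" by simp
    thus "(\<Sum>m\<in>{1..N}. 1 / real m ^ 2) \<le> 2" using sum_inverse_square_le[OF True] by linarith
  qed simp
  finally show ?thesis by simp
qed simp

lemma divide_fact_pred: "r \<ge> 1 \<Longrightarrow> x / fact (r - 1) = x * (real r / fact r)"
  by (cases r) simp_all

lemma card_hedges_le_small_r:
  fixes n r :: nat
  assumes "3 \<le> r" "r \<le> CARD('k::finite)" "8 ^ CARD('k) \<le> real n"
  shows "real (card (hedges n r :: (real^'k) set set))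
           \<le> real CARD('k) * 2 ^ (r + CARD('k)) / fact r * real n ^ (2 * CARD('k))"
proof -
  let ?k = "CARD('k)"
  have pow_bound: "8/3 * real r \<le> 2 ^ r"
    using of_nat_mono[OF eight_mul_le_two_pow[OF assms(1)], where 'a = real] by simp
  have "(?k + r - 1) + (?k - r + 1) = 2 * ?k" using assms by simp
  hence exponent: "real n ^ (?k + r - 1) * real n ^ (?k - r + 1) = real n ^ (2 * ?k)"
    by (metis power_add)
  have "real (card (hedges n r :: (real^'k) set set)) \<le> 2 * real ?k * real n ^ (?k + r - 1) / fact (r - 1) *
      (\<Sum>m\<in>{1..n - 1}. (2 * real m + 1) ^ (?k - 1) / real m ^ (r - 1))"
    using assms(1) by (intro card_hedges_le_weighted_sum) simp
  also have "\<dots> \<le> 2 * real ?k * real n ^ (?k + r - 1) / fact (r - 1) * (4/3 * 2 ^ ?k * real n ^ (?k - r + 1))"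
    using assms by (intro mult_left_mono shell_sum_le_small_r) auto
  also have "\<dots> = (8/3 * real r) * (real ?k * 2 ^ ?k / fact r) * real n ^ (2 * ?k)"
    using assms(1) by (simp only: divide_fact_pred[of r] flip: exponent) (simp add: field_simps)
  also have "\<dots> \<le> 2 ^ r * (real ?k * 2 ^ ?k / fact r) * real n ^ (2 * ?k)"
    using pow_bound by (intro mult_right_mono) auto
  also have "\<dots> = real ?k * 2 ^ (r + ?k) / fact r * real n ^ (2 * ?k)" by (simp add: power_add)
  finally show ?thesis .
qed

lemma card_hedges_le_critical_r:
  fixes n :: nat
  assumes "3 \<le> CARD('k::finite)" "2 \<le> n" "100 * real CARD('k) \<le> log 2 (real n)"
  shows "real (card (hedges n (CARD('k) + 1) :: (real^'k) set set))
           \<le> real CARD('k) * 2 ^ (CARD('k) + 1 + CARD('k)) / fact (CARD('k) + 1)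
              * real n ^ (2 * CARD('k)) * log 2 (real n)"
proof -
  let ?k = "CARD('k)" and ?L = "log 2 (real n)"
  let ?S = "\<Sum>m\<in>{1..n - 1}. (2 * real m + 1) ^ (?k - 1) / real m ^ ?k"
  have S: "?S \<le> 4 ^ ?k * ?L / real (?k + 1)"
    using shell_sum_le_critical_r[OF assms] by (subst pos_le_divide_eq) (auto simp: mult.commute)
  have fact_Suc: "(fact (?k + 1) :: real) = real (?k + 1) * fact ?k" by simp
  have four: "(4::real) ^ ?k = 2 ^ ?k * 2 ^ ?k" by (simp flip: power_mult_distrib)
  have two_pow: "(2::real) ^ (?k + 1 + ?k) = 2 * 4 ^ ?k" unfolding four by (simp add: power_add)
  have exponents: "?k + (?k + 1) - 1 = 2 * ?k" "?k + 1 - 1 = ?k" by simp_all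
  have "real (card (hedges n (?k + 1) :: (real^'k) set set))
      \<le> 2 * real ?k * real n ^ (?k + (?k + 1) - 1) / fact (?k + 1 - 1) *
         (\<Sum>m\<in>{1..n - 1}. (2 * real m + 1) ^ (?k - 1) / real m ^ (?k + 1 - 1))"
    by (rule card_hedges_le_weighted_sum) simp
  also have "\<dots> = 2 * real ?k * real n ^ (2 * ?k) / fact ?k * ?S" by (simp only: exponents)
  also have "\<dots> \<le> 2 * real ?k * real n ^ (2 * ?k) / fact ?k * (4 ^ ?k * ?L / real (?k + 1))"
    by (rule mult_left_mono[OF S]) simp
  also have "\<dots> = real ?k * 2 ^ (?k + 1 + ?k) / fact (?k + 1) * real n ^ (2 * ?k) * ?L"
    unfolding fact_Suc two_pow by (simp add: divide_inverse mult_ac)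
  finally show ?thesis .
qed

lemma card_hedges_le_large_r:
  fixes n r :: nat
  assumes "CARD('k::finite) + 2 \<le> r"
  shows "real (card (hedges n r :: (real^'k) set set))
           \<le> real CARD('k) * 2 ^ (r + CARD('k) + 1) / fact r * real n ^ (r + CARD('k) - 1)"
proof -
  let ?k = "CARD('k)"
  have k: "?k \<ge> 1" by (simp add: Suc_le_eq)
  have "real r * 3 ^ (?k - 1) \<le> 2 ^ (r + ?k - 1)"
    using of_nat_mono[OF mul_three_pow_le_two_pow[OF k assms], where 'a = real] by simp
  moreover have "(2::real) ^ (r + ?k + 1) = 4 * 2 ^ (r + ?k - 1)"
  proof -
    have "r + ?k + 1 = (r + ?k - 1) + 2" using assms by simp
    hence "(2::real) ^ (r + ?k + 1) = 2 ^ (r + ?k - 1) * 2 ^ 2" by (simp only: power_add)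
    thus ?thesis by simp
  qed
  ultimately have pow_bound: "4 * (real r * 3 ^ (?k - 1)) \<le> 2 ^ (r + ?k + 1)" by linarith
  have "real (card (hedges n r :: (real^'k) set set)) \<le> 2 * real ?k * real n ^ (?k + r - 1) / fact (r - 1) *
      (\<Sum>m\<in>{1..n - 1}. (2 * real m + 1) ^ (?k - 1) / real m ^ (r - 1))"
    using assms by (intro card_hedges_le_weighted_sum) simp
  also have "\<dots> \<le> 2 * real ?k * real n ^ (?k + r - 1) / fact (r - 1) * (2 * 3 ^ (?k - 1))"
    using k assms by (intro mult_left_mono shell_sum_le_large_r) auto
  also have "\<dots> = 4 * (real r * 3 ^ (?k - 1)) * (real ?k / fact r) * real n ^ (r + ?k - 1)"
    using assms
    by (simp only: divide_fact_pred[of r] add.commute[of ?k r]) (simp add: divide_inverse mult_ac)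
  also have "\<dots> \<le> 2 ^ (r + ?k + 1) * (real ?k / fact r) * real n ^ (r + ?k - 1)"
    using pow_bound by (intro mult_right_mono) auto
  also have "\<dots> = real ?k * 2 ^ (r + ?k + 1) / fact r * real n ^ (r + ?k - 1)" by simp
  finally show ?thesis .
qed

section \<open>Lower bound from axis-parallel lines\<close>

lemma fun_upd_image_eq_imp:
  assumes eq: "(\<lambda>a. y(i := a)) ` A = (\<lambda>a. y'(i' := a)) ` A'"
    and base: "y i = y' i'" and two: "a \<in> A" "b \<in> A" "a \<noteq> b"
  shows "i = i' \<and> y = y' \<and> A = A'"
proof -
  obtain a' b' where a': "y(i := a) = y'(i' := a')" and b': "y(i := b) = y'(i' := b')"
    using eq two by blast
  have "i = i'"
  proof (rule ccontr)
    assume "i \<noteq> i'"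
    hence "a = y' i" "b = y' i" using fun_cong[OF a', of i] fun_cong[OF b', of i] by auto
    thus False using two(3) by simp
  qed
  moreover have "y = y'"
  proof
    fix j show "y j = y' j"
      using base fun_cong[OF a', of j] \<open>i = i'\<close> by (cases "j = i") auto
  qed
  moreover have "inj (\<lambda>a. y(i := a))" by (rule injI) (metis fun_upd_same)
  ultimately show ?thesis using eq by (simp add: inj_image_eq_iff)
qed

definition axis_line :: "'k \<Rightarrow> ('k \<Rightarrow> int) \<Rightarrow> int set \<Rightarrow> (real^'k) set" where
  "axis_line i y A = (\<lambda>a. vec_of_int (y(i := a))) ` A"

definition axis_bases :: "nat \<Rightarrow> 'k \<Rightarrow> ('k \<Rightarrow> int) set" where
  "axis_bases n i = PiE UNIV (\<lambda>j. if j = i then {1} else {1..int n})"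

definition axis_codes :: "nat \<Rightarrow> nat \<Rightarrow> ('k \<times> ('k \<Rightarrow> int) \<times> int set) set" where
  "axis_codes n r = (SIGMA i:UNIV. axis_bases n i \<times> {A. A \<subseteq> {1..int n} \<and> card A = r})"

lemma mem_axis_bases_iff:
  "y \<in> axis_bases n i \<longleftrightarrow> y i = 1 \<and> (\<forall>j. j \<noteq> i \<longrightarrow> 1 \<le> y j \<and> y j \<le> int n)"
  by (auto simp: axis_bases_def PiE_UNIV_domain Pi_iff split: if_splits)

lemma card_axis_bases: "card (axis_bases n (i::'k::finite)) = n ^ (CARD('k) - 1)"
proof -
  let ?B = "\<lambda>j::'k. if j = i then {1::int} else {1..int n}"
  have "card (axis_bases n i) = (\<Prod>j\<in>UNIV. card (?B j))" by (simp add: axis_bases_def card_PiE)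
  also have "\<dots> = card (?B i) * (\<Prod>j\<in>UNIV - {i}. card (?B j))" by (rule prod.remove) auto
  also have "(\<Prod>j\<in>UNIV - {i}. card (?B j)) = (\<Prod>j\<in>UNIV - {i}. n)" by (rule prod.cong) auto
  finally show ?thesis by (simp add: card_Diff_singleton)
qed

lemma finite_axis_bases: "finite (axis_bases n (i::'k::finite))"
  by (simp add: axis_bases_def finite_PiE)

lemma card_axis_codes:
  "card (axis_codes n r :: ('k::finite \<times> _) set) = CARD('k) * (n choose r) * n ^ (CARD('k) - 1)"
proof -
  have "finite {A. A \<subseteq> {1..int n} \<and> card A = r}"
    by (rule finite_subset[of _ "Pow {1..int n}"]) auto
  moreover have "card {A. A \<subseteq> {1..int n} \<and> card A = r} = n choose r" by (simp add: n_subsets)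
  ultimately show ?thesis
    by (simp add: axis_codes_def card_SigmaI card_cartesian_product card_axis_bases finite_axis_bases)
qed

lemma axis_line_in_hedges:
  assumes "(i, y, A) \<in> axis_codes n r"
  shows "axis_line i y A \<in> hedges n r"
proof -
  have y: "y \<in> axis_bases n i" and A: "A \<subseteq> {1..int n}" "card A = r"
    using assms by (auto simp: axis_codes_def)
  have "inj_on (\<lambda>a. vec_of_int (y(i := a))) A"
    by (rule inj_onI) (metis fun_upd_same vec_of_int_eq_iff)
  hence "card (axis_line i y A) = r" using A(2) by (simp add: axis_line_def card_image)
  moreover have "axis_line i y A \<subseteq> grid n"
    using y A(1) by (auto simp: axis_line_def vec_of_int_in_grid_iff mem_int_grid_iff mem_axis_bases_iff)
  moreover have "axis_line i y A \<subseteq> progression (vec_of_int (y(i := 0))) (axis i 1) (nat ` A)"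
  proof
    fix p assume "p \<in> axis_line i y A"
    then obtain a where a: "a \<in> A" "p = vec_of_int (y(i := a))" by (auto simp: axis_line_def)
    hence "p = vec_of_int (y(i := 0)) + real (nat a) *\<^sub>R axis i 1"
      using A(1) by (auto simp: vec_eq_iff axis_def)
    thus "p \<in> progression (vec_of_int (y(i := 0))) (axis i 1) (nat ` A)"
      using a(1) by (auto simp: progression_def)
  qed
  hence "collinear (axis_line i y A)" by (rule collinear_subset[OF collinear_progression])
  ultimately show ?thesis by (simp add: hedges_def)
qed

lemma inj_on_axis_line:
  assumes "r \<ge> 2"
  shows "inj_on (\<lambda>(i, y, A). axis_line i y A) (axis_codes n r)"
proof (rule inj_onI)
  fix u v assume u: "u \<in> axis_codes n r" and v: "v \<in> axis_codes n r"
    and uv: "(\<lambda>(i, y, A). axis_line i y A) u = (\<lambda>(i, y, A). axis_line i y A) v"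
  obtain i y A i' y' A' where u_eq: "u = (i, y, A)" and v_eq: "v = (i', y', A')"
    by (cases u, cases v) auto
  have codes: "(i, y, A) \<in> axis_codes n r" "(i', y', A') \<in> axis_codes n r"
    and eq: "axis_line i y A = axis_line i' y' A'" using u v uv by (simp_all add: u_eq v_eq)
  have "2 \<le> card A" using codes assms by (auto simp: axis_codes_def)
  then obtain a b where ab: "a \<in> A" "b \<in> A" "a \<noteq> b" by (rule two_le_card_obtains)
  have base: "y i = y' i'" using codes by (auto simp: axis_codes_def mem_axis_bases_iff)
  have "vec_of_int ` (\<lambda>a. y(i := a)) ` A = vec_of_int ` (\<lambda>a. y'(i' := a)) ` A'"
    using eq by (simp add: axis_line_def image_image)
  hence "(\<lambda>a. y(i := a)) ` A = (\<lambda>a. y'(i' := a)) ` A'"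
    by (simp add: inj_image_eq_iff[OF inj_vec_of_int])
  hence "i = i' \<and> y = y' \<and> A = A'" using base ab by (rule fun_upd_image_eq_imp)
  thus "u = v" by (simp add: u_eq v_eq)
qed

lemma card_hedges_ge_axis_lines:
  assumes "r \<ge> 2"
  shows "CARD('k) * (n choose r) * n ^ (CARD('k) - 1) \<le> card (hedges n r :: (real^'k::finite) set set)"
proof -
  have "CARD('k) * (n choose r) * n ^ (CARD('k) - 1)
          = card ((\<lambda>(i, y, A). axis_line i y A) ` (axis_codes n r :: ('k \<times> _) set))"
    by (simp add: card_image[OF inj_on_axis_line[OF assms]] card_axis_codes)
  also have "\<dots> \<le> card (hedges n r :: (real^'k) set set)"
    using axis_line_in_hedges by (intro card_mono[OF finite_hedges]) auto
  finally show ?thesis .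
qed

section \<open>Lower bound from progressions with short steps\<close>

definition positive_steps :: "nat \<Rightarrow> 'k \<Rightarrow> ('k \<Rightarrow> int) set" where
  "positive_steps M i0 = PiE UNIV (\<lambda>i. if i = i0 then {1..int M} else {- int M..int M})"

lemma mem_positive_steps_iff:
  "w \<in> positive_steps M i0 \<longleftrightarrow> 1 \<le> w i0 \<and> (\<forall>i. \<bar>w i\<bar> \<le> int M)"
proof
  assume "w \<in> positive_steps M i0"
  hence w: "w i \<in> (if i = i0 then {1..int M} else {- int M..int M})" for i
    by (simp add: positive_steps_def PiE_UNIV_domain Pi_iff del: atLeastAtMost_iff)
  show "1 \<le> w i0 \<and> (\<forall>i. \<bar>w i\<bar> \<le> int M)"
  proof (intro conjI allI)
    show "1 \<le> w i0" using w[of i0] by simp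
    show "\<bar>w i\<bar> \<le> int M" for i using w[of i] by (cases "i = i0") auto
  qed
next
  assume w: "1 \<le> w i0 \<and> (\<forall>i. \<bar>w i\<bar> \<le> int M)"
  show "w \<in> positive_steps M i0" unfolding positive_steps_def PiE_UNIV_domain Pi_iff
  proof (intro ballI)
    fix i have "\<bar>w i\<bar> \<le> int M" using w by blast
    thus "w i \<in> (if i = i0 then {1..int M} else {- int M..int M})"
      using conjunct1[OF w] by (auto simp: abs_le_iff)
  qed
qed

lemma card_positive_steps:
  "card (positive_steps M (i0::'k::finite)) = M * (2 * M + 1) ^ (CARD('k) - 1)"
proof -
  let ?B = "\<lambda>i::'k. if i = i0 then {1..int M} else {- int M..int M}"
  have "card (positive_steps M i0) = (\<Prod>i\<in>UNIV. card (?B i))" by (simp add: positive_steps_def card_PiE)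
  also have "\<dots> = card (?B i0) * (\<Prod>i\<in>UNIV - {i0}. card (?B i))" by (rule prod.remove) auto
  also have "(\<Prod>i\<in>UNIV - {i0}. card (?B i)) = (\<Prod>i\<in>UNIV - {i0}. 2 * M + 1)"
  proof (rule prod.cong)
    have "nat (2 * int M + 1) = 2 * M + 1" by linarith
    thus "card (?B i) = 2 * M + 1" if "i \<in> UNIV - {i0}" for i using that by simp
  qed simp
  finally show ?thesis by (simp add: card_Diff_singleton)
qed

text \<open>The start point is shifted so that every coordinate of the progression lies between
  \<open>x i\<close> and \<open>x i + (r - 1) M\<close>, whatever the signs of the step.\<close>
definition ap_edge :: "nat \<Rightarrow> ('k \<Rightarrow> int) \<Rightarrow> ('k \<Rightarrow> int) \<Rightarrow> (real^'k) set" where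
  "ap_edge r w x = progression (vec_of_int (\<lambda>i. x i + int (r - 1) * max 0 (- w i))) (vec_of_int w) {0..<r}"

lemma shifted_step_bounds:
  fixes c M :: int
  assumes "t \<le> s" "\<bar>c\<bar> \<le> M"
  shows "0 \<le> int s * max 0 (- c) + int t * c \<and> int s * max 0 (- c) + int t * c \<le> int s * M"
proof (cases "c \<ge> 0")
  case True
  thus ?thesis using assms by (simp add: mult_mono)
next
  case False
  hence "int s * max 0 (- c) + int t * c = int (s - t) * (- c)" using assms by (simp add: algebra_simps of_nat_diff)
  moreover have "int (s - t) * (- c) \<le> int s * M" using False assms by (intro mult_mono) auto
  ultimately show ?thesis using False by (simp add: mult_nonneg_nonpos)
qed

lemma ap_edge_in_hedges:
  assumes "w \<in> positive_steps M i0" "x \<in> int_grid (n - (r - 1) * M)"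
  shows "ap_edge r w x \<in> hedges n r"
proof -
  have w: "1 \<le> w i0" "\<And>i. \<bar>w i\<bar> \<le> int M" using assms(1) by (auto simp: mem_positive_steps_iff)
  have x: "\<And>i. 1 \<le> x i \<and> x i \<le> int (n - (r - 1) * M)" using assms(2) by (simp add: mem_int_grid_iff)
  have "1 \<le> int (n - (r - 1) * M)" using x[of i0] by (meson order_trans)
  hence bound: "int (n - (r - 1) * M) + int (r - 1) * int M = int n" by (simp add: of_nat_diff)
  have v: "vec_of_int w \<noteq> 0" using w(1) vec_of_int_eq_0_iff by (metis not_one_le_zero)
  have "ap_edge r w x \<subseteq> grid n"
  proof
    fix p assume "p \<in> ap_edge r w x"
    then obtain t where t: "t < r" "p = vec_of_int (\<lambda>i. x i + (int (r - 1) * max 0 (- w i) + int t * w i))"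
      by (auto simp: ap_edge_def progression_def vec_eq_iff algebra_simps)
    have "t \<le> r - 1" using t(1) by simp
    have "1 \<le> x i + (int (r - 1) * max 0 (- w i) + int t * w i)
        \<and> x i + (int (r - 1) * max 0 (- w i) + int t * w i) \<le> int n" for i
    proof -
      define s where "s = int (r - 1) * max 0 (- w i) + int t * w i"
      have "0 \<le> s" "s \<le> int (r - 1) * int M"
        using shifted_step_bounds[OF \<open>t \<le> r - 1\<close> w(2)[of i]] by (simp_all add: s_def)
      moreover have "1 \<le> x i" "x i \<le> int (n - (r - 1) * M)" using x[of i] by simp_all
      ultimately have "1 \<le> x i + s \<and> x i + s \<le> int n" using bound by (smt (verit))
      thus ?thesis by (simp add: s_def)
    qed
    thus "p \<in> grid n" using t(2) by (simp add: vec_of_int_in_grid_iff mem_int_grid_iff)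
  qed
  moreover have "card (ap_edge r w x) = r" by (simp add: ap_edge_def card_progression[OF v])
  ultimately show ?thesis by (simp add: hedges_def ap_edge_def collinear_progression)
qed

lemma progression_eq_imp_eq:
  fixes x v x' v' :: "real^'k"
  assumes eq: "progression x v {0..<r} = progression x' v' {0..<r}" and "r \<ge> 2"
    and pos: "v $ i > 0" "v' $ i > 0"
  shows "x = x' \<and> v = v'"
proof -
  have "x + real t *\<^sub>R v \<in> progression x v {0..<r}" "x' + real t *\<^sub>R v' \<in> progression x' v' {0..<r}"
    if "t < r" for t
    using that by (auto simp: progression_def)
  hence "x + real t *\<^sub>R v \<in> progression x' v' {0..<r}" "x' + real t *\<^sub>R v' \<in> progression x v {0..<r}"
    if "t < r" for t
    using that eq by auto
  note mem = this[of 0] this[of 1]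
  obtain t where t: "x' = x + real t *\<^sub>R v" using mem(2) assms(2) by (auto simp: progression_def)
  obtain t' where t': "x = x' + real t' *\<^sub>R v'" using mem(1) assms(2) by (auto simp: progression_def)
  obtain a where a: "x + v = x' + real a *\<^sub>R v'" using mem(3) assms(2) by (auto simp: progression_def)
  obtain b where b: "x' + v' = x + real b *\<^sub>R v" using mem(4) assms(2) by (auto simp: progression_def)
  have "real t * v $ i + real t' * v' $ i = 0"
    using arg_cong[OF t, of "\<lambda>p. p $ i"] arg_cong[OF t', of "\<lambda>p. p $ i"] by simp
  moreover have "real t * v $ i \<ge> 0" "real t' * v' $ i \<ge> 0" using pos by simp_all
  ultimately have "real t * v $ i = 0" by linarith
  hence x: "x' = x" using t pos by simp
  have "v $ i = real a * v' $ i" "v' $ i = real b * v $ i"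
    using arg_cong[OF a, of "\<lambda>p. p $ i"] arg_cong[OF b, of "\<lambda>p. p $ i"] x by simp_all
  hence "v $ i = (real a * real b) * v $ i" by simp
  hence "real a * real b = 1" using pos by (simp add: mult_cancel_right1)
  hence "a = 1" by (metis of_nat_1 of_nat_eq_iff of_nat_mult nat_mult_eq_1_iff)
  thus ?thesis using a x by simp
qed

lemma inj_on_ap_edge:
  assumes "r \<ge> 2"
  shows "inj_on (\<lambda>(w, x). ap_edge r w x) (positive_steps M i0 \<times> int_grid n)"
proof (rule inj_onI, clarify)
  fix w x w' x' assume "w \<in> positive_steps M i0" "w' \<in> positive_steps M i0"
    and "ap_edge r w x = ap_edge r w' x'"
  hence "vec_of_int (\<lambda>i. x i + int (r - 1) * max 0 (- w i)) = vec_of_int (\<lambda>i. x' i + int (r - 1) * max 0 (- w' i))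
      \<and> vec_of_int w = vec_of_int w'"
    unfolding ap_edge_def
    by (intro progression_eq_imp_eq[of _ _ r _ _ i0] assms) (auto simp: mem_positive_steps_iff)
  thus "w = w' \<and> x = x'" by (auto simp: fun_eq_iff)
qed

lemma card_hedges_ge_progressions:
  assumes "r \<ge> 2"
  shows "M * (2 * M + 1) ^ (CARD('k) - 1) * (n - (r - 1) * M) ^ CARD('k)
           \<le> card (hedges n r :: (real^'k::finite) set set)"
proof -
  fix i0 :: 'k
  let ?C = "positive_steps M i0 \<times> int_grid (n - (r - 1) * M)"
  have "M * (2 * M + 1) ^ (CARD('k) - 1) * (n - (r - 1) * M) ^ CARD('k) = card ((\<lambda>(w, x). ap_edge r w x) ` ?C)"
    by (simp add: card_image[OF inj_on_ap_edge[OF assms]] card_cartesian_product card_positive_steps card_int_grid)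
  also have "\<dots> \<le> card (hedges n r :: (real^'k) set set)"
    using ap_edge_in_hedges by (intro card_mono[OF finite_hedges]) auto
  finally show ?thesis .
qed

lemma twenty_two_pow_le_nine_three_pow: "k \<ge> 2 \<Longrightarrow> 20 * 2 ^ k \<le> 9 * (3::nat) ^ k"
  by (induction k rule: nat_induct_at_least) simp_all

lemma power_pred_ge:
  fixes c :: real
  assumes "10 * real k \<le> c"
  shows "9/10 * c ^ k \<le> (c - 1) ^ k"
proof (cases "k = 0")
  case False
  hence "real k \<ge> 1" by simp
  hence c: "c > 0" using assms by linarith
  have "1 + real k * (- 1 / c) \<le> (1 + (- 1 / c)) ^ k"
    using c assms False by (intro Bernoulli_inequality) (auto simp: field_simps)
  moreover have "real k * (1 / c) \<le> 1/10" using assms c by (simp add: field_simps)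
  ultimately have "9/10 \<le> (1 - 1 / c) ^ k" by simp
  hence "c ^ k * (9/10) \<le> c ^ k * (1 - 1 / c) ^ k" using c by (intro mult_left_mono) auto
  also have "\<dots> = (c - 1) ^ k" using c by (simp add: field_simps flip: power_mult_distrib)
  finally show ?thesis by simp
qed simp

lemma progression_count_ge:
  fixes a c B :: real
  assumes "10 * real k \<le> c" "c - 1 \<le> a" "real r * c \<le> B" "r \<ge> 3" "k \<ge> 2"
  shows "4 ^ k * c ^ (2 * k) \<le> a * (2 * a + 1) ^ (k - 1) * B ^ k"
proof -
  have c: "c \<ge> 1" using assms by linarith
  have "2 ^ (k - 1) * (9/10 * c ^ k) \<le> 2 ^ (k - 1) * (c - 1) ^ k"
    using power_pred_ge[OF assms(1)] by simp
  also have "\<dots> = (c - 1) * (2 * (c - 1)) ^ (k - 1)"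
  proof -
    have "(c - 1) ^ k = (c - 1) * (c - 1) ^ (k - 1)" using assms(5) by (cases k) simp_all
    thus ?thesis by (simp only: power_mult_distrib mult_ac)
  qed
  also have "\<dots> \<le> a * (2 * a + 1) ^ (k - 1)"
    using assms(2) c by (intro mult_mono power_mono) auto
  finally have left: "2 ^ (k - 1) * (9/10 * c ^ k) \<le> a * (2 * a + 1) ^ (k - 1)" .
  have "3 * c \<le> real r * c" using assms(4) c by (intro mult_right_mono) auto
  hence "3 * c \<le> B" using assms(3) by linarith
  hence "(3 * c) ^ k \<le> B ^ k" using c by (intro power_mono) auto
  hence "3 ^ k * c ^ k \<le> B ^ k" by (simp add: power_mult_distrib)
  have "real (20 * 2 ^ k) \<le> real (9 * 3 ^ k)"
    by (rule of_nat_mono[OF twenty_two_pow_le_nine_three_pow[OF assms(5)]])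
  hence "2 * 2 ^ k \<le> 9/10 * (3::real) ^ k" by simp
  hence "2 ^ (k - 1) * (2 * 2 ^ k) \<le> 2 ^ (k - 1) * (9/10 * (3::real) ^ k)" by (rule mult_left_mono) simp
  moreover have "(4::real) ^ k = 2 ^ (k - 1) * (2 * 2 ^ k)"
  proof -
    have two: "(2::real) ^ k = 2 * 2 ^ (k - 1)" using assms(5) by (cases k) simp_all
    have "(4::real) ^ k = 2 ^ k * 2 ^ k" by (simp flip: power_mult_distrib)
    also have "\<dots> = (2 * 2 ^ (k - 1)) * 2 ^ k" by (subst two) (rule refl)
    finally show ?thesis by (simp add: mult_ac)
  qed
  ultimately have "4 ^ k * c ^ (2 * k) \<le> 2 ^ (k - 1) * (9/10 * 3 ^ k) * c ^ (2 * k)"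
    by (intro mult_right_mono) simp_all
  also have "\<dots> = (2 ^ (k - 1) * (9/10 * c ^ k)) * (3 ^ k * c ^ k)"
    unfolding mult_2 power_add by (simp add: mult_ac)
  also have "\<dots> \<le> (a * (2 * a + 1) ^ (k - 1)) * B ^ k"
    using assms(2) c by (intro mult_mono[OF left \<open>3 ^ k * c ^ k \<le> B ^ k\<close>]) auto
  finally show ?thesis .
qed

lemma card_hedges_ge_ratio_power:
  fixes n r :: nat
  assumes "r \<ge> 3" "CARD('k::finite) \<ge> 2" "20 * r * CARD('k) \<le> n"
  shows "real n ^ (2 * CARD('k)) / real r ^ (2 * CARD('k)) \<le> real (card (hedges n r :: (real^'k) set set))"
proof -
  let ?k = "CARD('k)"
  define M where "M = n div (2 * r)"
  define c where "c = real n / (2 * real r)"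
  have r: "real r > 0" using assms by simp
  have "M * (2 * r) \<le> n" unfolding M_def by (rule div_times_less_eq_dividend)
  hence "real (M * (2 * r)) \<le> real n" by (simp only: of_nat_le_iff)
  hence M_le: "real M \<le> c" using r by (simp add: c_def field_simps)
  have "M * (2 * r) + n mod (2 * r) = n" unfolding M_def by (rule div_mult_mod_eq)
  moreover have "n mod (2 * r) < 2 * r" using assms(1) by simp
  ultimately have "n < M * (2 * r) + 2 * r" by linarith
  hence "real n < real (M * (2 * r) + 2 * r)" by (simp only: of_nat_less_iff)
  hence M_ge: "c - 1 \<le> real M" using r by (simp add: c_def field_simps)
  have "real (r - 1) * real M \<le> real r * c" using M_le r by (intro mult_mono) auto
  moreover have "real r * c = real n / 2" using r by (simp add: c_def)
  ultimately have "(r - 1) * M \<le> n" and B: "real r * c \<le> real (n - (r - 1) * M)"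
    by (simp_all add: of_nat_diff flip: of_nat_mult)
  have kc: "10 * real ?k \<le> c" using of_nat_mono[OF assms(3)] r by (simp add: c_def field_simps)
  have "real n ^ (2 * ?k) / real r ^ (2 * ?k) = (2 * c) ^ (2 * ?k)"
    using r by (simp add: c_def power_divide)
  also have "\<dots> = 4 ^ ?k * c ^ (2 * ?k)" by (simp add: power_mult_distrib power_mult)
  also have "\<dots> \<le> real M * (2 * real M + 1) ^ (?k - 1) * real (n - (r - 1) * M) ^ ?k"
    using progression_count_ge[OF kc M_ge B assms(1,2)] .
  also have "\<dots> = real (M * (2 * M + 1) ^ (?k - 1) * (n - (r - 1) * M) ^ ?k)" by (simp add: add.commute)
  also have "\<dots> \<le> real (card (hedges n r :: (real^'k) set set))"
    by (intro of_nat_mono card_hedges_ge_progressions) (use assms(1) in simp)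
  finally show ?thesis .
qed

lemma two_power_le_of_log_bound:
  assumes "n \<ge> 1" "100 * real x \<le> log 2 (real n)"
  shows "2 ^ (100 * x) \<le> real n"
proof -
  have "(2::real) ^ (100 * x) = 2 powr real (100 * x)" using powr_realpow[of 2 "100 * x"] by simp
  also have "\<dots> \<le> 2 powr log 2 (real n)" using assms(2) by (intro powr_mono) auto
  also have "\<dots> = real n" using assms(1) by simp
  finally show ?thesis .
qed

lemma forty_square_le_two_pow:
  assumes "k \<ge> 1"
  shows "40 * k * k \<le> (2::nat) ^ (100 * k)"
proof -
  have "k * k \<le> 2 ^ (k + k)" unfolding power_add using less_exp[of k] by (intro mult_mono) auto
  hence "40 * (k * k) \<le> 64 * 2 ^ (k + k)" by (intro mult_le_mono) auto
  hence "40 * k * k \<le> 2 ^ 6 * 2 ^ (k + k)" by (simp add: mult.assoc)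
  also have "\<dots> = 2 ^ (k + k + 6)" by (simp only: power_add mult.commute)
  also have "\<dots> \<le> 2 ^ (100 * k)" using assms by (intro power_increasing) auto
  finally show ?thesis .
qed

lemma card_hedges_ge_ratio_power_if_large_n:
  fixes n r :: nat
  assumes "3 \<le> r" "r \<le> CARD('k::finite) + 1" "2 ^ (100 * CARD('k)) \<le> real n"
  shows "real n ^ (2 * CARD('k)) / real r ^ (2 * CARD('k)) \<le> real (card (hedges n r :: (real^'k) set set))"
proof -
  let ?k = "CARD('k)"
  have k: "?k \<ge> 2" using assms(1,2) by linarith
  have "20 * r * ?k \<le> 40 * ?k * ?k" using assms(2) k by (simp add: mult_mono)
  also have "\<dots> \<le> 2 ^ (100 * ?k)" using forty_square_le_two_pow k by simp
  finally have "real (20 * r * ?k) \<le> real n"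
    using assms(3) by (metis of_nat_le_iff of_nat_numeral of_nat_power order_trans)
  hence "20 * r * ?k \<le> n" by (simp only: of_nat_le_iff)
  thus ?thesis using assms(1) k by (intro card_hedges_ge_ratio_power) auto
qed

theorem claim4p1:
  fixes n r :: nat
  defines "k \<equiv> CARD('k::finite)"
  defines "e \<equiv> real (card (hedges n r :: (real^'k) set set))"
  assumes "n \<ge> 3" "k \<ge> 3" "r \<ge> 3"
    and "real r \<le> 0.01 * log 2 (real n)" "real k \<le> 0.01 * log 2 (real n)"
  shows "(r \<le> k \<longrightarrow>
           real n ^ (2*k) / real r ^ (2*k) \<le> e \<and>
           e \<le> real k * 2 ^ (r + k) / fact r * real n ^ (2*k))
       \<and> (r = k + 1 \<longrightarrow>
           real n ^ (2*k) / real r ^ (2*k) \<le> e \<and>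
           e \<le> real k * 2 ^ (r + k) / fact r * real n ^ (2*k) * log 2 (real n))
       \<and> (k + 1 < r \<and> r \<le> 2*k \<longrightarrow>
           real k * real (n choose r) * real n ^ (k - 1) \<le> e \<and>
           e \<le> real k * 2 ^ (r + k + 1) / fact r * real n ^ (r + k - 1))"
proof -
  have log_n: "100 * real k \<le> log 2 (real n)" using assms(7) by simp
  have n_large: "2 ^ (100 * k) \<le> real n" using two_power_le_of_log_bound[OF _ log_n] assms(3) by simp
  have "(8::real) ^ k \<le> (2 ^ 100) ^ k" by (rule power_mono) simp_all
  also have "\<dots> = 2 ^ (100 * k)" by (rule power_mult[symmetric])
  finally have n_ge_8_pow: "8 ^ k \<le> real n" using n_large by linarith
  have lower: "real n ^ (2*k) / real r ^ (2*k) \<le> e" if "r \<le> k + 1"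
    unfolding e_def k_def
    by (rule card_hedges_ge_ratio_power_if_large_n) (use that assms(5) n_large in \<open>simp_all add: k_def\<close>)
  have "k * (n choose r) * n ^ (k - 1) \<le> card (hedges n r :: (real^'k) set set)"
    unfolding k_def using assms(5) by (intro card_hedges_ge_axis_lines) simp
  hence axis_lower: "real k * real (n choose r) * real n ^ (k - 1) \<le> e"
    unfolding e_def by (metis of_nat_le_iff of_nat_mult of_nat_power)
  show ?thesis
  proof (intro conjI impI)
    assume "r \<le> k"
    thus "real n ^ (2*k) / real r ^ (2*k) \<le> e" using lower by simp
  next
    assume "r \<le> k"
    thus "e \<le> real k * 2 ^ (r + k) / fact r * real n ^ (2*k)"
      unfolding e_def k_def using assms(5) n_ge_8_pow by (intro card_hedges_le_small_r) (simp_all add: k_def)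
  next
    assume "r = k + 1"
    thus "real n ^ (2*k) / real r ^ (2*k) \<le> e" using lower by simp
  next
    assume r: "r = k + 1"
    have "real (card (hedges n (k + 1) :: (real^'k) set set))
        \<le> real k * 2 ^ (k + 1 + k) / fact (k + 1) * real n ^ (2 * k) * log 2 (real n)"
      unfolding k_def by (rule card_hedges_le_critical_r) (use assms(3,4) log_n in \<open>simp_all add: k_def\<close>)
    thus "e \<le> real k * 2 ^ (r + k) / fact r * real n ^ (2*k) * log 2 (real n)" by (simp add: e_def r)
  next
    show "real k * real (n choose r) * real n ^ (k - 1) \<le> e" by (fact axis_lower)
  next
    assume "k + 1 < r \<and> r \<le> 2*k"
    thus "e \<le> real k * 2 ^ (r + k + 1) / fact r * real n ^ (r + k - 1)"
      unfolding e_def k_def by (intro card_hedges_le_large_r) (simp add: k_def)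
  qed
qed

end
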